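(* Let $p\ge2$ be an integer and $\eta>-1$. (1) If $\eta\ge -\frac{p-1}{p}$, then $\tau_\ell(s)\le\pi$ for every $s\in[-1,1]$. (2) If $-1<\eta<-\frac{p-1}{p}$, then $\tau_\ell(s)\ge\pi$ for all $s$ with $\frac{p-1}{p|\eta|}\le|s|\le 1$, and $\tau_\ell(s)<\pi$ for all $s$ with $|s|<\frac{p-1}{p|\eta|}$.
   Context: For an integer $p\ge 2$ and a real parameter $\eta>-1$, define for $\tau\ge 0$ and $s\in[-1,1]$ $$\ell_-(\tau,s)=\cos\tau\,\sin\!\Big(\tau\eta s-\tfrac{\pi}{p}\Big)+s\sin\tau\,\cos\!\Big(\tau\eta s-\tfrac{\pi}{p}\Big),\qquad \ell_+(\tau,s)=\cos\tau\,\sin\!\Big(\tau\eta s+\tfrac{\pi}{p}\Big)+s\sin\tau\,\cos\!\Big(\tau\eta s+\tfrac{\pi}{p}\Big).$$ Let $\tau_\ell^-(s)$ (resp. $\tau_\ell^+(s)$) be the smallest positive root in $\tau$ of $\ell_-(\tau,s)=0$ (resp. $\ell_+(\tau,s)=0$), and $\tau_\ell(s)=\min(\tau_\ell^-(s),\tau_\ell^+(s))$. *)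

theory Defs
  imports Complex_Main
begin

definition ell_minus :: "nat \<Rightarrow> real \<Rightarrow> real \<Rightarrow> real \<Rightarrow> real" where
  "ell_minus p \<eta> \<tau> s = cos \<tau> * sin (\<tau> * \<eta> * s - pi / real p) + s * sin \<tau> * cos (\<tau> * \<eta> * s - pi / real p)"

definition ell_plus :: "nat \<Rightarrow> real \<Rightarrow> real \<Rightarrow> real \<Rightarrow> real" where
  "ell_plus p \<eta> \<tau> s = cos \<tau> * sin (\<tau> * \<eta> * s + pi / real p) + s * sin \<tau> * cos (\<tau> * \<eta> * s + pi / real p)"

text \<open>Smallest positive root in tau (as an infimum of the set of positive roots;
  since ell(0,s) is nonzero, this infimum is attained whenever a root exists).\<close>
definition tau_minus :: "nat \<Rightarrow> real \<Rightarrow> real \<Rightarrow> real" where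
  "tau_minus p \<eta> s = Inf {\<tau>. \<tau> > 0 \<and> ell_minus p \<eta> \<tau> s = 0}"

definition tau_plus :: "nat \<Rightarrow> real \<Rightarrow> real \<Rightarrow> real" where
  "tau_plus p \<eta> s = Inf {\<tau>. \<tau> > 0 \<and> ell_plus p \<eta> \<tau> s = 0}"

definition tau_ell :: "nat \<Rightarrow> real \<Rightarrow> real \<Rightarrow> real" where
  "tau_ell p \<eta> s = min (tau_minus p \<eta> s) (tau_plus p \<eta> s)"

end

theory Submission
  imports Defs
begin

text \<open>
  Upper bounds only need \<open>\<ell>\<^sub>-\<close>: since \<open>\<ell>\<^sub>-(0, s) = -sin(\<pi>/p) < 0\<close>, the intermediate
  value theorem gives \<open>\<tau>\<^sub>\<ell>(s) \<le> T\<close> whenever \<open>\<ell>\<^sub>-(T, s) \<ge> 0\<close>. One takes \<open>T = \<pi>\<close>, where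
  \<open>\<ell>\<^sub>-(\<pi>, s) = sin(\<pi>/p - \<pi>\<eta>s)\<close>, or \<open>T = \<pi>/(p\<eta>s) < \<pi>\<close> when \<open>\<eta>s > 1/p\<close>.
  For the lower bound write \<open>(cos \<tau>, s sin \<tau>) = r (cos \<alpha>, sin \<alpha>)\<close>, so that
  \<open>\<ell>\<^sub>\<plusminus>(\<tau>, s) = r sin(\<alpha> - \<beta>\<tau> \<plusminus> \<pi>/p)\<close> with \<open>\<beta> = -\<eta>s\<close>. The estimate
  \<open>s\<tau> \<le> \<alpha> \<le> \<pi> - s(\<pi> - \<tau>)\<close> keeps both phases strictly between consecutive zeros of
  the sine for \<open>0 < \<tau> < \<pi>\<close> as soon as \<open>(p-1)/p \<le> \<beta> < s\<close>. As \<open>\<tau>\<^sub>\<ell>\<close> is even in \<open>s\<close>,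
  it suffices to treat \<open>s \<ge> 0\<close>.
\<close>

lemma ell_plus_eq_uminus_ell_minus: "ell_plus p \<eta> t s = - ell_minus p \<eta> t (-s)"
proof -
  have arg: "t * \<eta> * - s - pi / real p = - (t * \<eta> * s + pi / real p)" by simp
  show ?thesis
    unfolding ell_plus_def ell_minus_def arg sin_minus cos_minus by (simp add: algebra_simps)
qed

lemma tau_ell_uminus: "tau_ell p \<eta> (-s) = tau_ell p \<eta> s"
proof -
  have "tau_minus p \<eta> (-s) = tau_plus p \<eta> s"
    unfolding tau_minus_def tau_plus_def ell_plus_eq_uminus_ell_minus by simp
  moreover have "tau_plus p \<eta> (-s) = tau_minus p \<eta> s"
    unfolding tau_minus_def tau_plus_def ell_plus_eq_uminus_ell_minus by simp
  ultimately show ?thesis unfolding tau_ell_def by simp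
qed

lemma tau_ell_abs: "tau_ell p \<eta> \<bar>s\<bar> = tau_ell p \<eta> s"
  by (cases "0 \<le> s") (simp_all add: tau_ell_uminus)

lemma Inf_positive_roots_le:
  fixes f :: "real \<Rightarrow> 'a::zero"
  assumes "0 < t" "f t = 0"
  shows "Inf {\<tau>. 0 < \<tau> \<and> f \<tau> = 0} \<le> t"
  using assms by (intro cInf_lower bdd_belowI[of _ 0]) auto

lemma le_Inf_positive_roots:
  fixes f :: "real \<Rightarrow> 'a::zero"
  assumes "0 < t" "f t = 0" "\<And>\<tau>. 0 < \<tau> \<Longrightarrow> \<tau> < T \<Longrightarrow> f \<tau> \<noteq> 0"
  shows "T \<le> Inf {\<tau>. 0 < \<tau> \<and> f \<tau> = 0}"
  using assms by (intro cInf_greatest) (auto simp: not_less[symmetric])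

lemma exists_nat_multiple_between:
  fixes a c :: real
  assumes "0 < a" "0 < c"
  shows "\<exists>k::nat. 0 < k \<and> a \<le> real k * c \<and> real k * c < a + c"
proof (intro exI conjI)
  define k where "k = nat \<lceil>a / c\<rceil>"
  have k: "real k = of_int \<lceil>a / c\<rceil>" unfolding k_def using assms by simp
  show "0 < k" unfolding k_def using assms by simp
  have "a / c \<le> real k" unfolding k by (rule le_of_int_ceiling)
  then show "a \<le> real k * c" using assms by (simp add: pos_divide_le_eq)
  have "real k < a / c + 1" unfolding k by linarith
  then show "real k * c < a + c" using assms by (simp add: pos_less_divide_eq field_simps)
qed

lemma continuous_on_ell_minus: "continuous_on S (\<lambda>t. ell_minus p \<eta> t s)"
  unfolding ell_minus_def by (intro continuous_intros)

lemma ell_minus_zero_neg: "p \<ge> 2 \<Longrightarrow> ell_minus p \<eta> 0 s < 0"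
  unfolding ell_minus_def by (simp add: sin_gt_zero field_simps)

lemma ell_minus_pi: "ell_minus p \<eta> pi s = sin (pi / real p - pi * \<eta> * s)"
  unfolding ell_minus_def by (simp flip: sin_minus)

lemma ell_minus_multiple_pi:
  "ell_minus p \<eta> (real k * pi) s = sin (real k * pi * (1 + \<eta> * s) - pi / real p)"
proof -
  have "sin (real k * pi * (1 + \<eta> * s) - pi / real p)
      = sin ((real k * pi * \<eta> * s - pi / real p) + real k * pi)"
    by (simp add: algebra_simps)
  also have "\<dots> = cos (real k * pi) * sin (real k * pi * \<eta> * s - pi / real p)"
    by (simp add: sin_add)
  finally show ?thesis unfolding ell_minus_def by simp
qed

lemma ell_plus_multiple_pi:
  "ell_plus p \<eta> (real k * pi) s = sin (real k * pi * (1 + \<eta> * s) + pi / real p)"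
proof -
  have "sin (real k * pi * (1 + \<eta> * s) + pi / real p)
      = sin ((real k * pi * \<eta> * s + pi / real p) + real k * pi)"
    by (simp add: algebra_simps)
  also have "\<dots> = cos (real k * pi) * sin (real k * pi * \<eta> * s + pi / real p)"
    by (simp add: sin_add)
  finally show ?thesis unfolding ell_plus_def by simp
qed

lemma ell_minus_root_le:
  assumes "p \<ge> 2" "0 \<le> T" "0 \<le> ell_minus p \<eta> T s"
  obtains t where "0 < t" "t \<le> T" "ell_minus p \<eta> t s = 0"
proof -
  have "ell_minus p \<eta> 0 s \<le> 0" using ell_minus_zero_neg[OF assms(1)] by (rule less_imp_le)
  then obtain t where t: "0 \<le> t" "t \<le> T" "ell_minus p \<eta> t s = 0"
    using IVT'[OF _ assms(3,2) continuous_on_ell_minus] by blast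
  moreover have "t \<noteq> 0" using t(3) ell_minus_zero_neg[OF assms(1), of \<eta> s] by auto
  ultimately show thesis using that by force
qed

lemma tau_minus_le:
  assumes "p \<ge> 2" "0 \<le> T" "0 \<le> ell_minus p \<eta> T s"
  shows "tau_minus p \<eta> s \<le> T"
proof -
  obtain t where "0 < t" "t \<le> T" "ell_minus p \<eta> t s = 0"
    using ell_minus_root_le[OF assms] .
  then show ?thesis unfolding tau_minus_def using Inf_positive_roots_le by fastforce
qed

lemma tau_minus_less:
  assumes "p \<ge> 2" "0 \<le> T" "0 < ell_minus p \<eta> T s"
  shows "tau_minus p \<eta> s < T"
proof -
  obtain t where "0 < t" "t \<le> T" "ell_minus p \<eta> t s = 0"
    using ell_minus_root_le[OF assms(1,2) less_imp_le[OF assms(3)]] .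
  moreover have "t \<noteq> T" using \<open>ell_minus p \<eta> t s = 0\<close> assms(3) by auto
  ultimately show ?thesis
    unfolding tau_minus_def using Inf_positive_roots_le[of t] by fastforce
qed

lemma tau_minus_le_pi:
  assumes "p \<ge> 2" "- ((real p - 1) / real p) \<le> \<eta> * s" "\<eta> * s \<le> 1 / real p"
  shows "tau_minus p \<eta> s \<le> pi"
proof (rule tau_minus_le[OF assms(1)])
  have "pi * (\<eta> * s) \<le> pi / real p" "- (pi * (real p - 1) / real p) \<le> pi * (\<eta> * s)"
    using mult_left_mono[OF assms(3), of pi] mult_left_mono[OF assms(2), of pi] by simp_all
  moreover have "pi * (real p - 1) / real p = pi - pi / real p"
    using assms(1) by (simp add: field_simps)
  ultimately show "0 \<le> ell_minus p \<eta> pi s"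
    unfolding ell_minus_pi by (intro sin_ge_zero) (simp_all add: algebra_simps)
qed simp

lemma tau_minus_less_pi:
  assumes "p \<ge> 2" "- ((real p - 1) / real p) < \<eta> * s" "\<eta> * s < 1 / real p"
  shows "tau_minus p \<eta> s < pi"
proof (rule tau_minus_less[OF assms(1)])
  have "pi * (\<eta> * s) < pi / real p" "- (pi * (real p - 1) / real p) < pi * (\<eta> * s)"
    using mult_strict_left_mono[OF assms(3), of pi] mult_strict_left_mono[OF assms(2), of pi]
    by simp_all
  moreover have "pi * (real p - 1) / real p = pi - pi / real p"
    using assms(1) by (simp add: field_simps)
  ultimately show "0 < ell_minus p \<eta> pi s"
    unfolding ell_minus_pi by (intro sin_gt_zero) (simp_all add: algebra_simps)
qed simp

text \<open>At \<open>t = \<pi> / (p \<eta> s)\<close> the first summand of \<open>\<ell>\<^sub>-\<close> vanishes.\<close>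

lemma tau_minus_less_pi_of_large:
  assumes "p \<ge> 2" "0 < s" "1 / real p < \<eta> * s"
  shows "tau_minus p \<eta> s < pi"
proof -
  define d where "d = real p * (\<eta> * s)"
  have "1 < d" unfolding d_def using assms(1,3) by (simp add: field_simps)
  define t where "t = pi / d"
  have t: "0 < t" "t < pi" unfolding t_def using \<open>1 < d\<close> by (simp_all add: field_simps)
  have "t * d = pi" unfolding t_def using \<open>1 < d\<close> by simp
  then have "t * \<eta> * s = pi / real p" unfolding d_def using assms(1) by (simp add: eq_divide_eq mult_ac)
  then have "ell_minus p \<eta> t s = s * sin t" unfolding ell_minus_def by simp
  then have "0 \<le> ell_minus p \<eta> t s" using assms(2) sin_gt_zero[OF t] by simp
  then have "tau_minus p \<eta> s \<le> t" by (rule tau_minus_le[OF assms(1) less_imp_le[OF t(1)]])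
  with t(2) show ?thesis by simp
qed

lemma tau_ell_le_pi:
  assumes "p \<ge> 2" "0 \<le> s" "s \<le> 1" "- ((real p - 1) / real p) \<le> \<eta>"
  shows "tau_ell p \<eta> s \<le> pi"
proof -
  have "- ((real p - 1) / real p) \<le> \<eta> * s"
  proof (cases "0 \<le> \<eta>")
    case False
    then have "\<eta> \<le> \<eta> * s" using assms(3) mult_left_mono_neg[of s 1 \<eta>] by simp
    then show ?thesis using assms(4) by linarith
  next
    case True
    then have "0 \<le> \<eta> * s" using assms(2) by simp
    moreover have "0 \<le> (real p - 1) / real p" using assms(1) by simp
    ultimately show ?thesis by linarith
  qed
  then have "tau_minus p \<eta> s \<le> pi"
  proof (cases "\<eta> * s \<le> 1 / real p")
    case False
    then have "0 < s" using assms(2) by (cases "s = 0") simp_all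
    then show ?thesis
      using tau_minus_less_pi_of_large[OF assms(1) \<open>0 < s\<close>, of \<eta>] False by simp
  qed (use tau_minus_le_pi[OF assms(1)] in simp)
  then show ?thesis unfolding tau_ell_def by simp
qed

lemma tau_ell_less_pi:
  assumes "p \<ge> 2" "- ((real p - 1) / real p) < \<eta> * s" "\<eta> * s < 1 / real p"
  shows "tau_ell p \<eta> s < pi"
  using tau_minus_less_pi[OF assms] unfolding tau_ell_def by simp

lemma arctan_scaled_tan_le:
  fixes s t :: real
  assumes "0 \<le> s" "s \<le> 1" "0 \<le> t" "t < pi / 2"
  shows "arctan (s * tan t) \<le> t"
proof -
  have "s * tan t \<le> tan t"
    by (rule mult_left_le_one_le[OF tan_pos_pi2_le[OF assms(3,4)] assms(1,2)])
  then have "arctan (s * tan t) \<le> arctan (tan t)" by (rule arctan_monotone')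
  also have "\<dots> = t" using assms by (intro arctan_tan) simp_all
  finally show ?thesis .
qed

lemma arctan_scaled_tan_ge:
  fixes s t :: real
  assumes "0 \<le> s" "s \<le> 1" "0 \<le> t" "t < pi / 2"
  shows "s * t \<le> arctan (s * tan t)"
proof -
  define f where "f u = arctan (s * tan u) - s * u" for u
  have "f 0 \<le> f t"
  proof (rule DERIV_nonneg_imp_nondecreasing[OF assms(3)])
    fix u assume u: "0 \<le> u" "u \<le> t"
    have c: "0 < cos u" using u assms(4) by (intro cos_gt_zero_pi) simp_all
    define d where "d = (s * sin u)\<^sup>2 + (cos u)\<^sup>2"
    have "(s * sin u)\<^sup>2 \<le> (sin u)\<^sup>2"
      using assms(1,2) by (simp add: power_mult_distrib mult_left_le_one_le power_le_one)
    then have d: "0 < d" "d \<le> 1"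
      unfolding d_def using c sin_cos_squared_add[of u] by (simp add: add_nonneg_pos, linarith)
    have "s * d \<le> s" using d assms(1) by (simp add: mult_left_le)
    then have "s \<le> s / d" using d by (simp add: le_divide_eq)
    moreover have "inverse (1 + (s * tan u)\<^sup>2) * (s * inverse ((cos u)\<^sup>2)) = s / d"
      unfolding d_def using c by (simp add: tan_def field_simps power_mult_distrib power_divide)
    moreover have "(f has_real_derivative inverse (1 + (s * tan u)\<^sup>2) * (s * inverse ((cos u)\<^sup>2)) - s) (at u)"
      unfolding f_def[abs_def] using c by (auto intro!: derivative_eq_intros)
    ultimately show "\<exists>y. (f has_real_derivative y) (at u) \<and> 0 \<le> y" by force
  qed
  then show ?thesis unfolding f_def by simp
qed

text \<open>The argument of the point \<open>(cos t, s sin t)\<close> of the ellipse, for \<open>0 < t < \<pi>\<close>.\<close>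

definition ellipse_arg :: "real \<Rightarrow> real \<Rightarrow> real" where
  "ellipse_arg s t = pi / 2 - arctan (cos t / (s * sin t))"

lemma ellipse_arg_pi_minus: "ellipse_arg s (pi - t) = pi - ellipse_arg s t"
  unfolding ellipse_arg_def by (simp add: arctan_minus)

lemma ellipse_arg_eq_arctan:
  assumes "0 < s" "0 < t" "t < pi / 2"
  shows "ellipse_arg s t = arctan (s * tan t)"
proof -
  have "0 < cos t" "0 < sin t" using assms by (simp_all add: cos_gt_zero_pi sin_gt_zero)
  then have x: "0 < s * tan t" and "cos t / (s * sin t) = 1 / (s * tan t)"
    using assms(1) by (simp_all add: tan_def)
  moreover have "s * tan t \<noteq> 0" using x by linarith
  ultimately show ?thesis unfolding ellipse_arg_def using arctan_inverse[of "s * tan t"] by simp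
qed

lemma ellipse_arg_ge:
  assumes "0 < s" "s \<le> 1" "0 < t" "t < pi"
  shows "s * t \<le> ellipse_arg s t"
proof -
  consider "t < pi / 2" | "t = pi / 2" | "pi / 2 < t" by linarith
  then show ?thesis
  proof cases
    case 1
    then show ?thesis using assms ellipse_arg_eq_arctan arctan_scaled_tan_ge by simp
  next
    case 2
    then show ?thesis unfolding 2 ellipse_arg_def using assms by (simp add: mult_left_le_one_le)
  next
    case 3
    have "t \<le> pi - arctan (s * tan (pi - t))"
      using arctan_scaled_tan_le[of s "pi - t"] assms 3 by simp
    also have "\<dots> = ellipse_arg s t"
      using ellipse_arg_pi_minus[of s "pi - t"] ellipse_arg_eq_arctan[of s "pi - t"] assms 3 by simp
    moreover have "s * t \<le> t" using assms by (intro mult_left_le_one_le) simp_all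
    ultimately show ?thesis by linarith
  qed
qed

lemma ellipse_arg_le:
  assumes "0 < s" "s \<le> 1" "0 < t" "t < pi"
  shows "ellipse_arg s t \<le> pi - s * (pi - t)"
  using ellipse_arg_ge[of s "pi - t"] ellipse_arg_pi_minus[of s t] assms by simp

lemma ellipse_phase_form:
  assumes "0 < s" "0 < sin t"
  obtains r where "0 < r" "\<And>x. cos t * sin x + s * sin t * cos x = r * sin (ellipse_arg s t + x)"
proof
  define w where "w = cos t / (s * sin t)"
  define r where "r = s * sin t * sqrt (1 + w\<^sup>2)"
  have q: "0 < sqrt (1 + w\<^sup>2)" by (simp add: add_pos_nonneg)
  then show "0 < r" unfolding r_def using assms by simp
  have "cos (ellipse_arg s t) = w / sqrt (1 + w\<^sup>2)" "sin (ellipse_arg s t) = 1 / sqrt (1 + w\<^sup>2)"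
    unfolding ellipse_arg_def w_def[symmetric] by (simp_all add: cos_diff sin_diff sin_arctan cos_arctan)
  then have "r * cos (ellipse_arg s t) = s * sin t * w" "r * sin (ellipse_arg s t) = s * sin t"
    unfolding r_def using q by simp_all
  moreover have "s * sin t * w = cos t" unfolding w_def using assms by simp
  ultimately have polar: "r * cos (ellipse_arg s t) = cos t" "r * sin (ellipse_arg s t) = s * sin t"
    by simp_all
  show "cos t * sin x + s * sin t * cos x = r * sin (ellipse_arg s t + x)" for x
    unfolding sin_add distrib_left mult.assoc[symmetric] polar by simp
qed

lemma ell_signs_below_pi:
  assumes p: "p \<ge> 2" and s: "0 < s" "s \<le> 1"
    and \<eta>s: "(real p - 1) / real p \<le> - \<eta> * s" "- \<eta> * s < s" and t: "0 < t" "t < pi"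
  shows "ell_minus p \<eta> t s < 0" "0 < ell_plus p \<eta> t s"
proof -
  define \<beta> where "\<beta> = - \<eta> * s"
  define \<theta> where "\<theta> = pi / real p"
  define \<alpha> where "\<alpha> = ellipse_arg s t"
  obtain r where r: "0 < r" "\<And>x. cos t * sin x + s * sin t * cos x = r * sin (\<alpha> + x)"
    using ellipse_phase_form[OF s(1) sin_gt_zero[OF t]] unfolding \<alpha>_def by blast
  have ell: "ell_minus p \<eta> t s = r * sin (\<alpha> - \<beta> * t - \<theta>)"
    "ell_plus p \<eta> t s = r * sin (\<alpha> - \<beta> * t + \<theta>)"
    unfolding ell_minus_def ell_plus_def r(2) \<beta>_def \<theta>_def by (simp_all add: algebra_simps)
  have \<theta>: "0 < \<theta>" "\<theta> \<le> pi / 2" unfolding \<theta>_def using p by (simp_all add: field_simps)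
  have "(real p - 1) / real p * pi = pi - \<theta>" unfolding \<theta>_def using p by (simp add: field_simps)
  moreover have "(real p - 1) / real p \<le> \<beta>" using \<eta>s(1) unfolding \<beta>_def .
  then have "(real p - 1) / real p * pi \<le> \<beta> * pi" by (rule mult_right_mono) simp
  ultimately have \<beta>: "pi - \<theta> \<le> \<beta> * pi" by simp
  have "\<beta> < s" using \<eta>s(2) unfolding \<beta>_def .
  then have "\<beta> * t < s * t" "\<beta> * (pi - t) < s * (pi - t)"
    using t by (simp_all add: mult_strict_right_mono)
  then have slack: "\<beta> * t < s * t" "s * t - \<beta> * t < s * pi - \<beta> * pi"
    by (simp_all add: algebra_simps)
  have \<alpha>: "s * t \<le> \<alpha>" "\<alpha> \<le> pi - s * pi + s * t"
    using ellipse_arg_ge[OF s t] ellipse_arg_le[OF s t] unfolding \<alpha>_def by (simp_all add: algebra_simps)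
  have "0 < sin (- (\<alpha> - \<beta> * t - \<theta>))" using \<alpha> \<beta> \<theta> slack by (intro sin_gt_zero) linarith+
  then have "sin (\<alpha> - \<beta> * t - \<theta>) < 0" unfolding sin_minus by simp
  then show "ell_minus p \<eta> t s < 0" unfolding ell using r(1) by (simp add: mult_pos_neg)
  have "0 < sin (\<alpha> - \<beta> * t + \<theta>)" using \<alpha> \<beta> \<theta> slack by (intro sin_gt_zero) linarith+
  then show "0 < ell_plus p \<eta> t s" unfolding ell using r(1) by simp
qed

lemma ell_minus_has_positive_root:
  assumes "p \<ge> 2" "0 < 1 + \<eta> * s" "1 + \<eta> * s \<le> 1"
  shows "\<exists>t>0. ell_minus p \<eta> t s = 0"
proof -
  define c where "c = 1 + \<eta> * s"
  obtain k :: nat where k: "0 < k" "pi / real p \<le> real k * pi * c"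
    "real k * pi * c < pi / real p + pi * c"
    using exists_nat_multiple_between[of "pi / real p" "pi * c"] assms
    unfolding c_def by (auto simp: mult.assoc)
  have "pi * c \<le> pi" using assms(3) unfolding c_def by simp
  then have root_sign: "0 \<le> ell_minus p \<eta> (real k * pi) s"
    unfolding ell_minus_multiple_pi c_def[symmetric] using k by (intro sin_ge_zero) linarith+
  obtain t where "0 < t" "ell_minus p \<eta> t s = 0"
    by (rule ell_minus_root_le[OF assms(1) _ root_sign]) auto
  then show ?thesis by blast
qed

lemma ell_plus_has_positive_root:
  assumes "p \<ge> 2" "0 < 1 + \<eta> * s" "1 + \<eta> * s \<le> 1"
  shows "\<exists>t>0. ell_plus p \<eta> t s = 0"
proof -
  define c where "c = 1 + \<eta> * s"
  have "0 < pi - pi / real p" using assms(1) by (simp add: field_simps)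
  then obtain k :: nat where k: "0 < k" "pi - pi / real p \<le> real k * pi * c"
    "real k * pi * c < pi - pi / real p + pi * c"
    using exists_nat_multiple_between[of "pi - pi / real p" "pi * c"] assms
    unfolding c_def by (auto simp: mult.assoc)
  have "pi * c \<le> pi" using assms(3) unfolding c_def by simp
  then have "ell_plus p \<eta> (real k * pi) s \<le> 0"
    unfolding ell_plus_multiple_pi c_def[symmetric] using k by (intro sin_le_zero) linarith+
  then have root_sign: "0 \<le> ell_minus p \<eta> (real k * pi) (- s)"
    unfolding ell_plus_eq_uminus_ell_minus by simp
  obtain t where "0 < t" "ell_minus p \<eta> t (- s) = 0"
    by (rule ell_minus_root_le[OF assms(1) _ root_sign]) auto
  then show ?thesis unfolding ell_plus_eq_uminus_ell_minus by auto
qed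

lemma pi_le_tau_ell:
  assumes "p \<ge> 2" "0 < s" "s \<le> 1" "-1 < \<eta>" "(real p - 1) / real p \<le> - \<eta> * s"
  shows "pi \<le> tau_ell p \<eta> s"
proof -
  have "- \<eta> * s < s" using mult_strict_right_mono[of "- \<eta>" 1 s] assms(2,4) by simp
  moreover have "0 \<le> (real p - 1) / real p" using assms(1) by simp
  ultimately have c: "0 < 1 + \<eta> * s" "1 + \<eta> * s \<le> 1"
    using assms(3,5) unfolding minus_mult_left[symmetric] by linarith+
  note signs = ell_signs_below_pi[OF assms(1-3,5) \<open>- \<eta> * s < s\<close>]
  \<comment> \<open>Roots have to be exhibited: the infimum of the empty set of reals is unspecified.\<close>
  obtain t where "0 < t" "ell_minus p \<eta> t s = 0"
    using ell_minus_has_positive_root[OF assms(1) c] by blast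
  then have "pi \<le> tau_minus p \<eta> s"
    unfolding tau_minus_def by (rule le_Inf_positive_roots) (use signs(1) in force)
  moreover obtain t' where "0 < t'" "ell_plus p \<eta> t' s = 0"
    using ell_plus_has_positive_root[OF assms(1) c] by blast
  then have "pi \<le> tau_plus p \<eta> s"
    unfolding tau_plus_def by (rule le_Inf_positive_roots) (use signs(2) in force)
  ultimately show ?thesis unfolding tau_ell_def by simp
qed

theorem mainTheorem3:
  fixes p :: nat and \<eta> :: real
  assumes "p \<ge> 2" and "\<eta> > -1"
  shows "(\<eta> \<ge> - (real p - 1) / real p \<longrightarrow>
            (\<forall>s \<in> {-1..1}. tau_ell p \<eta> s \<le> pi))
       \<and> (\<eta> < - (real p - 1) / real p \<longrightarrow>
            (\<forall>s. (real p - 1) / (real p * \<bar>\<eta>\<bar>) \<le> \<bar>s\<bar> \<and> \<bar>s\<bar> \<le> 1 \<longrightarrow> tau_ell p \<eta> s \<ge> pi)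
          \<and> (\<forall>s. \<bar>s\<bar> < (real p - 1) / (real p * \<bar>\<eta>\<bar>) \<longrightarrow> tau_ell p \<eta> s < pi))"
proof -
  define q where "q = (real p - 1) / real p"
  have q: "0 < q" "(real p - 1) / (real p * \<bar>\<eta>\<bar>) = q / \<bar>\<eta>\<bar>"
    unfolding q_def using assms(1) by simp_all
  have minus_q: "- (real p - 1) / real p = - q" unfolding q_def by (rule minus_divide_left[symmetric])
  have "tau_ell p \<eta> s \<le> pi" if "- q \<le> \<eta>" "\<bar>s\<bar> \<le> 1" for s
    using tau_ell_le_pi[OF assms(1) abs_ge_zero that(2)] that(1) unfolding q_def tau_ell_abs by simp
  moreover have "pi \<le> tau_ell p \<eta> s" if "\<eta> < - q" "q / \<bar>\<eta>\<bar> \<le> \<bar>s\<bar>" "\<bar>s\<bar> \<le> 1" for s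
  proof -
    have "0 < \<bar>\<eta>\<bar>" "\<bar>s\<bar> * \<bar>\<eta>\<bar> = - \<eta> * \<bar>s\<bar>" using that(1) q(1) by simp_all
    then have "q \<le> - \<eta> * \<bar>s\<bar>" using that(2) by (simp only: pos_divide_le_eq)
    then show ?thesis
      using pi_le_tau_ell[OF assms(1) _ that(3) assms(2)] q(1) unfolding q_def tau_ell_abs by force
  qed
  moreover have "tau_ell p \<eta> s < pi" if "\<eta> < - q" "\<bar>s\<bar> < q / \<bar>\<eta>\<bar>" for s
  proof -
    have "0 < \<bar>\<eta>\<bar>" "\<bar>s\<bar> * \<bar>\<eta>\<bar> = - (\<eta> * \<bar>s\<bar>)" using that(1) q(1) by simp_all
    then have "- q < \<eta> * \<bar>s\<bar>" using that(2) by (simp only: pos_less_divide_eq)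
    moreover have "\<eta> * \<bar>s\<bar> \<le> 0" using that(1) q(1) by (intro mult_nonpos_nonneg) simp_all
    then have "\<eta> * \<bar>s\<bar> < 1 / real p" using assms(1) by (simp add: le_less_trans)
    ultimately have "tau_ell p \<eta> \<bar>s\<bar> < pi" unfolding q_def by (rule tau_ell_less_pi[OF assms(1)])
    then show ?thesis by (simp only: tau_ell_abs)
  qed
  ultimately show ?thesis unfolding q(2) minus_q by auto
qed

end
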